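(* Consider simultaneous double $Q$-learning (SDQ) on a finite MDP as described in the context, with constant step-size $\alpha\in(0,1)$, discount factor $\gamma\in(0,1)$, rewards bounded by $1$ in absolute value, i.i.d. sampling of state-action pairs from a distribution $d$ with $d(s,a)>0$ for all $(s,a)$, and initial estimators satisfying $\|Q_0^A\|_\infty\le 1$, $\|Q_0^B\|_\infty\le 1$. Let $d_{\min}=\min_{(s,a)}d(s,a)$ and $\rho=1-\alpha d_{\min}(1-\gamma)$. Then for every $k\ge 0$, \[ \mathbb{E}\big[\|Q_k^A-Q^*\|_\infty\big]\le \frac{120\,\alpha^{1/2}|\mathcal{S}\times\mathcal{A}|}{d_{\min}^{9/2}(1-\gamma)^{11/2}}+\frac{48\,|\mathcal{S}\times\mathcal{A}|^{3/2}}{1-\gamma}\cdot\frac{\rho^{-4}(-8)^4}{(\ln\rho)^4}\,\rho^{-4/\ln\rho}\,\rho^{k/2}, \] and the same bound holds for $\mathbb{E}[\|Q_k^B-Q^*\|_\infty]$.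
   Context: Finite MDP: state space $\mathcal{S}=\{1,\dots,|\mathcal{S}|\}$, action space $\mathcal{A}=\{1,\dots,|\mathcal{A}|\}$, transition probabilities $P(s'|s,a)$, deterministic reward $r(s,a,s')$ with $\max|r(s,a,s')|\le 1$, discount $\gamma\in(0,1)$; the MDP is assumed ergodic. $Q^*$ is the optimal action-value function. A behavior policy $\beta$ and a stationary state distribution $p$ give $d(s,a)=p(s)\beta(a|s)$, assumed $>0$ for all $(s,a)$. At each iteration $k=0,1,\dots$, $(s_k,a_k)$ is drawn independently from $d$, $s_{k+1}$ is drawn from $P(\cdot|s_k,a_k)$, and $r_{k+1}=r(s_k,a_k,s_{k+1})$. SDQ maintains two tables $Q_k^A,Q_k^B:\mathcal{S}\times\mathcal{A}\to\mathbb{R}$ and updates only the entry $(s_k,a_k)$ of each (other entries unchanged): $Q_{k+1}^A(s_k,a_k)=Q_k^A(s_k,a_k)+\alpha\{r_{k+1}+\gamma Q_k^A(s_{k+1},\arg\max_{a}Q_k^B(s_{k+1},a))-Q_k^A(s_k,a_k)\}$, $Q_{k+1}^B(s_k,a_k)=Q_k^B(s_k,a_k)+\alpha\{r_{k+1}+\gamma Q_k^B(s_{k+1},\arg\max_{a}Q_k^A(s_{k+1},a))-Q_k^B(s_k,a_k)\}$, with constant step-size $\alpha\in(0,1)$. $|\mathcal{S}\times\mathcal{A}|=|\mathcal{S}||\mathcal{A}|$. *)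

theory Defs
  imports "HOL-Probability.Probability"
begin

definition supnorm :: "('s::finite \<Rightarrow> 'a::finite \<Rightarrow> real) \<Rightarrow> real" where
  "supnorm Q = Max (range (\<lambda>(s,a). \<bar>Q s a\<bar>))"

text \<open>Bellman optimality operator and the optimal action-value function Q*
  (its unique fixed point, which exists since gamma < 1).\<close>

definition bellman_opt ::
  "('s::finite \<Rightarrow> 'a::finite \<Rightarrow> 's pmf) \<Rightarrow> ('s \<Rightarrow> 'a \<Rightarrow> 's \<Rightarrow> real) \<Rightarrow> real
   \<Rightarrow> ('s \<Rightarrow> 'a \<Rightarrow> real) \<Rightarrow> ('s \<Rightarrow> 'a \<Rightarrow> real)" where
  "bellman_opt P r \<gamma> Q = (\<lambda>s a. measure_pmf.expectation (P s a)
      (\<lambda>s'. r s a s' + \<gamma> * Max (range (Q s'))))"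

definition Qstar ::
  "('s::finite \<Rightarrow> 'a::finite \<Rightarrow> 's pmf) \<Rightarrow> ('s \<Rightarrow> 'a \<Rightarrow> 's \<Rightarrow> real) \<Rightarrow> real
   \<Rightarrow> ('s \<Rightarrow> 'a \<Rightarrow> real)" where
  "Qstar P r \<gamma> = (THE Q. bellman_opt P r \<gamma> Q = Q)"

text \<open>One SDQ update with observed transition (s,a,s'). The argument amax is
  the (arbitrary but fixed) tie-breaking rule realising arg max over actions.\<close>

definition sdq_step ::
  "(('a \<Rightarrow> real) \<Rightarrow> 'a) \<Rightarrow> real \<Rightarrow> real \<Rightarrow> ('s \<Rightarrow> 'a \<Rightarrow> 's \<Rightarrow> real)
   \<Rightarrow> ('s \<Rightarrow> 'a \<Rightarrow> real) \<times> ('s \<Rightarrow> 'a \<Rightarrow> real) \<Rightarrow> 's \<times> 'a \<times> 's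
   \<Rightarrow> ('s \<Rightarrow> 'a \<Rightarrow> real) \<times> ('s \<Rightarrow> 'a \<Rightarrow> real)" where
  "sdq_step amax \<alpha> \<gamma> r QQ x =
     (case QQ of (QA, QB) \<Rightarrow> case x of (s, a, s') \<Rightarrow>
       (QA(s := (QA s)(a := QA s a + \<alpha> * (r s a s' + \<gamma> * QA s' (amax (QB s')) - QA s a))),
        QB(s := (QB s)(a := QB s a + \<alpha> * (r s a s' + \<gamma> * QB s' (amax (QA s')) - QB s a)))))"

definition sample_pmf :: "('s \<times> 'a) pmf \<Rightarrow> ('s \<Rightarrow> 'a \<Rightarrow> 's pmf) \<Rightarrow> ('s \<times> 'a \<times> 's) pmf" where
  "sample_pmf d P = d \<bind> (\<lambda>(s,a). map_pmf (\<lambda>s'. (s, a, s')) (P s a))"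

text \<open>Law of (Q_k^A, Q_k^B): samples are i.i.d. across iterations.\<close>

primrec sdq_dist ::
  "(('a \<Rightarrow> real) \<Rightarrow> 'a) \<Rightarrow> real \<Rightarrow> real \<Rightarrow> ('s \<Rightarrow> 'a \<Rightarrow> 's \<Rightarrow> real)
   \<Rightarrow> ('s \<times> 'a) pmf \<Rightarrow> ('s \<Rightarrow> 'a \<Rightarrow> 's pmf)
   \<Rightarrow> ('s \<Rightarrow> 'a \<Rightarrow> real) \<Rightarrow> ('s \<Rightarrow> 'a \<Rightarrow> real) \<Rightarrow> nat
   \<Rightarrow> (('s \<Rightarrow> 'a \<Rightarrow> real) \<times> ('s \<Rightarrow> 'a \<Rightarrow> real)) pmf" where
  "sdq_dist amax \<alpha> \<gamma> r d P QA0 QB0 0 = return_pmf (QA0, QB0)"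
| "sdq_dist amax \<alpha> \<gamma> r d P QA0 QB0 (Suc k) =
     sdq_dist amax \<alpha> \<gamma> r d P QA0 QB0 k \<bind>
       (\<lambda>QQ. map_pmf (sdq_step amax \<alpha> \<gamma> r QQ) (sample_pmf d P))"

end

theory Submission
  imports Defs
begin

text \<open>Split the error of each table as \<open>Q - Q\<^sup>* = z + y\<close>. The noise \<open>z\<close> is driven by the
  centred sampling error, \<open>z' = (1 - \<alpha> D) z + \<alpha> (X - E X)\<close>, so its expected squared
  Euclidean norm stays below \<open>2 \<alpha> (2 / (1 - \<gamma>))\<^sup>2 / dmin\<close>. The residual \<open>y\<close> evolves
  without sampling noise, \<open>y' = (1 - \<alpha> D) y + \<alpha> D \<gamma> P (u - V\<^sup>*)\<close>, where \<open>u\<close> is one table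
  evaluated at the greedy action of the other. As \<open>\<bar>u - V\<^sup>*\<bar>\<close> is bounded by the errors of
  both tables plus their gap, \<open>max \<parallel>y\<^sup>A\<parallel> \<parallel>y\<^sup>B\<parallel> (4 / (1 - \<gamma>) \<parallel>y\<^sup>A - y\<^sup>B\<parallel>)\<close> contracts by
  the factor \<open>1 - 3/4 \<alpha> dmin (1 - \<gamma>)\<close> up to a term linear in \<open>\<parallel>z\<parallel>\<close>. Solving the resulting
  linear recursion for the expectations gives a geometric transient plus a steady-state
  term of order \<open>\<surd>\<alpha> / (dmin powr (3/2) (1 - \<gamma>)\<^sup>3)\<close>, both dominated by the stated bound;
  for \<open>\<alpha> > 8/9\<close> the a priori bound \<open>2 / (1 - \<gamma>)\<close> suffices. Swapping the two tables turns
  the bound for \<open>Q\<^sup>A\<close> into the one for \<open>Q\<^sup>B\<close>.\<close>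

section \<open>Sup norm and expectations over finite supports\<close>

lemma abs_le_supnorm: "\<bar>Q s a\<bar> \<le> supnorm (Q :: 's::finite \<Rightarrow> 'a::finite \<Rightarrow> real)"
  unfolding supnorm_def by (rule Max_ge) auto

lemma supnorm_leI: "(\<And>s a. \<bar>Q s a\<bar> \<le> B) \<Longrightarrow> supnorm (Q :: 's::finite \<Rightarrow> 'a::finite \<Rightarrow> real) \<le> B"
  unfolding supnorm_def by (subst Max_le_iff) auto

lemma supnorm_nonneg: "0 \<le> supnorm (Q :: 's::finite \<Rightarrow> 'a::finite \<Rightarrow> real)"
  using abs_le_supnorm abs_ge_zero order_trans by metis

lemma supnorm_attained:
  obtains s a where "supnorm (Q :: 's::finite \<Rightarrow> 'a::finite \<Rightarrow> real) = \<bar>Q s a\<bar>"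
proof -
  have "supnorm Q \<in> range (\<lambda>(s, a). \<bar>Q s a\<bar>)" unfolding supnorm_def by (rule Max_in) auto
  then show ?thesis using that by auto
qed

definition sqnorm :: "('s::finite \<Rightarrow> 'a::finite \<Rightarrow> real) \<Rightarrow> real" where
  "sqnorm Q = (\<Sum>(s, a)\<in>UNIV. (Q s a)\<^sup>2)"

lemma supnorm_sq_le_sqnorm: "(supnorm Q)\<^sup>2 \<le> sqnorm Q"
proof -
  obtain s a where "supnorm Q = \<bar>Q s a\<bar>" by (rule supnorm_attained)
  moreover have "(Q s a)\<^sup>2 \<le> (\<Sum>(s, a)\<in>UNIV. (Q s a)\<^sup>2)"
    using member_le_sum[of "(s, a)" UNIV "\<lambda>(s, a). (Q s a)\<^sup>2"] by auto
  ultimately show ?thesis unfolding sqnorm_def by simp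
qed

lemma Max_range_eq_argmax:
  fixes f :: "'a::finite \<Rightarrow> real"
  assumes "\<And>b. f b \<le> f b0"
  shows "Max (range f) = f b0"
  using assms by (intro Max_eqI) auto

lemma abs_Max_range_diff_le:
  fixes f g :: "'a::finite \<Rightarrow> real"
  assumes "\<And>b. \<bar>f b - g b\<bar> \<le> B"
  shows "\<bar>Max (range f) - Max (range g)\<bar> \<le> B"
proof -
  have "Max (range f) \<in> range f" "Max (range g) \<in> range g" by (intro Max_in; simp)+
  then obtain bf bg where bf: "Max (range f) = f bf" and bg: "Max (range g) = g bg" by blast
  have "f bg \<le> f bf" "g bf \<le> g bg"
    using Max_ge[of "range f" "f bg"] Max_ge[of "range g" "g bf"] bf bg by auto
  then show ?thesis using assms[of bf] assms[of bg] bf bg by (simp add: abs_le_iff)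
qed

lemma integrable_measure_pmf_finite_type [simp]:
  "integrable (measure_pmf (M :: 'x::finite pmf)) (f :: 'x \<Rightarrow> real)"
  by (rule integrable_measure_pmf_finite) simp

lemma expectation_finite_type:
  "measure_pmf.expectation (M :: 'x::finite pmf) f = (\<Sum>x\<in>UNIV. pmf M x * f x)"
  by (subst integral_measure_pmf_real[where A = UNIV]) (auto simp: mult.commute)

lemma expectation_mono_finite:
  fixes f g :: "'x \<Rightarrow> real"
  assumes "finite (set_pmf M)" "\<And>x. x \<in> set_pmf M \<Longrightarrow> f x \<le> g x"
  shows "measure_pmf.expectation M f \<le> measure_pmf.expectation M g"
  using assms by (intro integral_mono_AE integrable_measure_pmf_finite) (auto simp: AE_measure_pmf_iff)

lemma abs_expectation_le:
  fixes f :: "'x \<Rightarrow> real"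
  assumes "finite (set_pmf M)" "\<And>x. \<bar>f x\<bar> \<le> B"
  shows "\<bar>measure_pmf.expectation M f\<bar> \<le> B"
proof -
  have "\<bar>measure_pmf.expectation M f\<bar> \<le> measure_pmf.expectation M (\<lambda>x. \<bar>f x\<bar>)"
    by (rule integral_abs_bound)
  also have "\<dots> \<le> measure_pmf.expectation M (\<lambda>_. B)"
    using assms by (intro expectation_mono_finite) auto
  finally show ?thesis by simp
qed

lemma expectation_bind_pmf_finite:
  fixes f :: "'y \<Rightarrow> real"
  assumes "finite (set_pmf M)" "\<And>x. x \<in> set_pmf M \<Longrightarrow> finite (set_pmf (N x))"
  shows "measure_pmf.expectation (M \<bind> N) f
       = measure_pmf.expectation M (\<lambda>x. measure_pmf.expectation (N x) f)"
  using assms by (simp add: pmf_expectation_bind[where A = "set_pmf M"] integral_measure_pmf[where A = "set_pmf M"])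

lemma expectation_affine_sq_le:
  fixes X :: "'x::finite \<Rightarrow> real"
  assumes "measure_pmf.expectation M X = m"
  shows "measure_pmf.expectation M (\<lambda>x. (c + \<alpha> * (X x - m))\<^sup>2)
         \<le> c\<^sup>2 + \<alpha>\<^sup>2 * measure_pmf.expectation M (\<lambda>x. (X x)\<^sup>2)"
proof -
  have "(\<lambda>x. (c + \<alpha> * (X x - m))\<^sup>2)
      = (\<lambda>x. (c\<^sup>2 - 2 * c * \<alpha> * m + \<alpha>\<^sup>2 * m\<^sup>2) + (2 * c * \<alpha> - 2 * \<alpha>\<^sup>2 * m) * X x + \<alpha>\<^sup>2 * (X x)\<^sup>2)"
    by (simp add: fun_eq_iff power2_eq_square algebra_simps)
  then have "measure_pmf.expectation M (\<lambda>x. (c + \<alpha> * (X x - m))\<^sup>2)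
      = c\<^sup>2 + \<alpha>\<^sup>2 * measure_pmf.expectation M (\<lambda>x. (X x)\<^sup>2) - \<alpha>\<^sup>2 * m\<^sup>2"
    using assms by (simp add: power2_eq_square algebra_simps)
  then show ?thesis by simp
qed

lemma geometric_recursion_le:
  fixes x :: "nat \<Rightarrow> real"
  assumes c: "0 \<le> c" "c < 1" and b: "0 \<le> b" and step: "\<And>k. x (Suc k) \<le> c * x k + b"
  shows "x k \<le> c ^ k * x 0 + b / (1 - c)"
proof (induction k)
  case 0
  then show ?case using b c by simp
next
  case (Suc k)
  have "x (Suc k) \<le> c * (c ^ k * x 0 + b / (1 - c)) + b"
    using step[of k] mult_left_mono[OF Suc c(1)] by linarith
  also have "\<dots> = c ^ Suc k * x 0 + b / (1 - c)"
    using c by (simp add: field_simps)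
  finally show ?case .
qed

section \<open>Fixed points of sup-norm contractions\<close>

lemma supnorm_funpow_contraction:
  fixes T :: "('s::finite \<Rightarrow> 'a::finite \<Rightarrow> real) \<Rightarrow> ('s \<Rightarrow> 'a \<Rightarrow> real)"
  assumes "0 \<le> \<gamma>"
    and contr: "\<And>Q Q'. supnorm (\<lambda>s a. T Q s a - T Q' s a) \<le> \<gamma> * supnorm (\<lambda>s a. Q s a - Q' s a)"
  shows "supnorm (\<lambda>s a. (T ^^ m) Q s a - (T ^^ m) Q' s a) \<le> \<gamma> ^ m * supnorm (\<lambda>s a. Q s a - Q' s a)"
proof (induction m)
  case 0
  then show ?case by simp
next
  case (Suc m)
  then show ?case
    using contr[of "(T ^^ m) Q" "(T ^^ m) Q'"] mult_left_mono[OF Suc \<open>0 \<le> \<gamma>\<close>] by (simp add: mult.assoc)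
qed

lemma supnorm_contraction_fixpoint_unique:
  fixes T :: "('s::finite \<Rightarrow> 'a::finite \<Rightarrow> real) \<Rightarrow> ('s \<Rightarrow> 'a \<Rightarrow> real)"
  assumes "c < 1"
    and contr: "supnorm (\<lambda>s a. T Q s a - T Q' s a) \<le> c * supnorm (\<lambda>s a. Q s a - Q' s a)"
    and "T Q = Q" "T Q' = Q'"
  shows "Q = Q'"
proof -
  have "(1 - c) * supnorm (\<lambda>s a. Q s a - Q' s a) \<le> 0"
    using contr assms(3,4) by (simp add: algebra_simps)
  then have "supnorm (\<lambda>s a. Q s a - Q' s a) \<le> 0"
    using \<open>c < 1\<close> by (simp add: mult_le_0_iff)
  then have "\<bar>Q s a - Q' s a\<bar> \<le> 0" for s a
    using abs_le_supnorm[of "\<lambda>s a. Q s a - Q' s a"] order_trans by blast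
  then show ?thesis by (intro ext) simp
qed

text \<open>On \<open>real ^ ('s \<times> 'a)\<close> the Euclidean distance lies between the sup norm and
  \<open>CARD('s \<times> 'a)\<close> times the sup norm, so a sup-norm contraction with a small enough constant
  is a contraction of a complete metric space.\<close>

lemma supnorm_contraction_has_fixpoint:
  fixes T :: "('s::finite \<Rightarrow> 'a::finite \<Rightarrow> real) \<Rightarrow> ('s \<Rightarrow> 'a \<Rightarrow> real)"
  assumes c: "0 \<le> c" "real CARD('s \<times> 'a) * c < 1"
    and contr: "\<And>Q Q'. supnorm (\<lambda>s a. T Q s a - T Q' s a) \<le> c * supnorm (\<lambda>s a. Q s a - Q' s a)"
  shows "\<exists>Q. T Q = Q"
proof -
  define n where "n = real CARD('s \<times> 'a)"
  define to_fun :: "real ^ ('s \<times> 'a) \<Rightarrow> 's \<Rightarrow> 'a \<Rightarrow> real" where "to_fun v s a = v $ (s, a)" for v s a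
  define to_vec :: "('s \<Rightarrow> 'a \<Rightarrow> real) \<Rightarrow> real ^ ('s \<times> 'a)" where "to_vec Q = (\<chi> i. Q (fst i) (snd i))" for Q
  have to_fun_to_vec: "to_fun (to_vec Q) = Q" for Q unfolding to_fun_def to_vec_def by simp
  have supnorm_le_dist: "supnorm (\<lambda>s a. to_fun v s a - to_fun w s a) \<le> dist v w" for v w
    using component_le_norm_cart[of "v - w"] by (intro supnorm_leI) (simp add: to_fun_def dist_norm)
  have dist_le_supnorm: "dist (to_vec Q) (to_vec Q') \<le> n * supnorm (\<lambda>s a. Q s a - Q' s a)" for Q Q'
  proof -
    have "dist (to_vec Q) (to_vec Q') \<le> (\<Sum>i\<in>UNIV. \<bar>(to_vec Q - to_vec Q') $ i\<bar>)"
      unfolding dist_norm by (rule norm_le_l1_cart)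
    also have "\<dots> \<le> (\<Sum>i\<in>(UNIV :: ('s \<times> 'a) set). supnorm (\<lambda>s a. Q s a - Q' s a))"
      using abs_le_supnorm[of "\<lambda>s a. Q s a - Q' s a"] by (intro sum_mono) (simp add: to_vec_def)
    finally show ?thesis by (simp add: n_def)
  qed
  have "\<exists>!v. to_vec (T (to_fun v)) = v"
  proof (rule banach_fix_type[where c = "n * c"])
    show "0 \<le> n * c" "n * c < 1" using c unfolding n_def by auto
    show "\<forall>v w. dist (to_vec (T (to_fun v))) (to_vec (T (to_fun w))) \<le> n * c * dist v w"
    proof (intro allI)
      fix v w
      have "dist (to_vec (T (to_fun v))) (to_vec (T (to_fun w)))
          \<le> n * supnorm (\<lambda>s a. T (to_fun v) s a - T (to_fun w) s a)"
        by (rule dist_le_supnorm)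
      also have "\<dots> \<le> n * (c * supnorm (\<lambda>s a. to_fun v s a - to_fun w s a))"
        by (rule mult_left_mono[OF contr]) (simp add: n_def)
      also have "\<dots> \<le> n * (c * dist v w)"
        using supnorm_le_dist c unfolding n_def by (intro mult_left_mono) auto
      finally show "dist (to_vec (T (to_fun v))) (to_vec (T (to_fun w))) \<le> n * c * dist v w"
        by (simp add: mult.assoc)
    qed
  qed
  then obtain v where "to_vec (T (to_fun v)) = v" by blast
  then have "to_fun (to_vec (T (to_fun v))) = to_fun v" by simp
  then show ?thesis unfolding to_fun_to_vec by blast
qed

lemma supnorm_contraction_has_unique_fixpoint:
  fixes T :: "('s::finite \<Rightarrow> 'a::finite \<Rightarrow> real) \<Rightarrow> ('s \<Rightarrow> 'a \<Rightarrow> real)"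
  assumes \<gamma>: "0 \<le> \<gamma>" "\<gamma> < 1"
    and contr: "\<And>Q Q'. supnorm (\<lambda>s a. T Q s a - T Q' s a) \<le> \<gamma> * supnorm (\<lambda>s a. Q s a - Q' s a)"
  shows "\<exists>!Q. T Q = Q"
proof -
  have "0 < CARD('s \<times> 'a)" by (rule finite_UNIV_card_ge_0) simp
  then have n: "1 \<le> real CARD('s \<times> 'a)" by linarith
  obtain m where m0: "\<gamma> ^ m < 1 / real CARD('s \<times> 'a)"
    using real_arch_pow_inv[of "1 / real CARD('s \<times> 'a)" \<gamma>] n \<gamma> by force
  then have m: "real CARD('s \<times> 'a) * \<gamma> ^ m < 1"
    using n by (simp add: field_simps)
  have "1 / real CARD('s \<times> 'a) \<le> 1" using n by simp
  then have "\<gamma> ^ m < 1" using m0 by linarith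
  note contr_m = supnorm_funpow_contraction[OF \<gamma>(1) contr, of m]
  obtain Q where fix_m: "(T ^^ m) Q = Q"
    using supnorm_contraction_has_fixpoint[where T = "T ^^ m", OF _ m contr_m] \<gamma> by auto
  have "(T ^^ m) (T Q) = T ((T ^^ m) Q)" by (rule funpow_swap1[symmetric])
  then have "(T ^^ m) (T Q) = T Q" unfolding fix_m .
  then have "T Q = Q"
    using supnorm_contraction_fixpoint_unique[where T = "T ^^ m", OF \<open>\<gamma> ^ m < 1\<close> contr_m] fix_m
    by blast
  moreover have "Q' = Q''" if "T Q' = Q'" "T Q'' = Q''" for Q' Q''
    using supnorm_contraction_fixpoint_unique[OF \<gamma>(2) contr that] .
  ultimately show ?thesis by blast
qed

lemma sdq_step_swap:
  "sdq_step amax \<alpha> \<gamma> r (prod.swap QQ) \<xi> = prod.swap (sdq_step amax \<alpha> \<gamma> r QQ \<xi>)"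
  by (cases QQ; cases \<xi>) (simp add: sdq_step_def)

lemma sdq_dist_swap:
  "sdq_dist amax \<alpha> \<gamma> r d P Q' Q k = map_pmf prod.swap (sdq_dist amax \<alpha> \<gamma> r d P Q Q' k)"
proof (induction k)
  case 0
  then show ?case by simp
next
  case (Suc k)
  then show ?case
    by (simp add: bind_map_pmf map_bind_pmf map_pmf_comp sdq_step_swap[symmetric])
qed

lemma finite_set_pmf_sdq_dist:
  fixes P :: "'s::finite \<Rightarrow> 'a::finite \<Rightarrow> 's pmf"
  shows "finite (set_pmf (sdq_dist amax \<alpha> \<gamma> r d P QA0 QB0 k))"
  by (induction k) auto

lemma abs_mult_ln_le_1:
  fixes x :: real
  assumes "0 < x" "x \<le> 1"
  shows "\<bar>x * ln x\<bar> \<le> 1"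
proof -
  have "ln (1 / x) \<le> 1 / x - 1" using assms by (intro ln_le_minus_one) simp
  then have "x * (- ln x) \<le> x * (1 / x - 1)" using assms by (intro mult_left_mono) (auto simp: ln_div)
  also have "\<dots> \<le> 1" using assms by (simp add: field_simps)
  finally show ?thesis using assms by (simp add: abs_mult abs_of_nonpos)
qed

text \<open>Uses \<open>\<rho> powr (-4 / ln \<rho>) = exp (-4)\<close> and \<open>\<bar>\<rho> ln \<rho>\<bar> \<le> 1\<close>.\<close>

lemma transient_coefficient_ge:
  fixes \<rho> N g :: real
  assumes \<rho>: "0 < \<rho>" "\<rho> < 1" and N: "1 \<le> N" and g: "0 < g"
  shows "8 / g \<le> 48 * N powr (3/2) / g * (\<rho> powr (-4) * (-8)^4 / (ln \<rho>)^4) * \<rho> powr (-4 / ln \<rho>)"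
proof -
  have ln: "ln \<rho> \<noteq> 0" using \<rho> by simp
  have "exp (4::real) \<le> 81"
  proof -
    have "exp (4::real) = exp 1 ^ 4" by (simp flip: exp_of_nat_mult)
    also have "\<dots> \<le> 3 ^ 4" using exp_le by (intro power_mono) auto
    finally show ?thesis by simp
  qed
  then have "1 / 81 \<le> 1 / exp (4::real)" by (intro divide_left_mono) auto
  moreover have "\<rho> powr (-4 / ln \<rho>) = 1 / exp 4" using \<rho> ln by (simp add: powr_def exp_minus inverse_eq_divide)
  ultimately have c: "1 / 81 \<le> \<rho> powr (-4 / ln \<rho>)" by simp
  have "\<bar>\<rho> * ln \<rho>\<bar> ^ 4 \<le> 1"
    using abs_mult_ln_le_1[of \<rho>] \<rho> by (intro power_le_one) auto
  then have "(\<rho> * ln \<rho>)^4 \<le> 1" by (simp add: power_even_abs_numeral)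
  moreover have "0 < (\<rho> * ln \<rho>)^4" using \<rho> ln by simp
  moreover have "\<rho> powr (-4) * (-8)^4 / (ln \<rho>)^4 = 4096 / (\<rho> * ln \<rho>)^4"
    using \<rho> by (simp add: powr_minus power_mult_distrib field_simps)
  ultimately have b: "4096 \<le> \<rho> powr (-4) * (-8)^4 / (ln \<rho>)^4" by (simp add: field_simps)
  have a: "1 \<le> N powr (3/2)" using N by (intro ge_one_powr_ge_zero) auto
  have "8 / g \<le> 48 * 1 / g * 4096 * (1 / 81)" using g by (simp add: field_simps)
  also have "\<dots> \<le> 48 * N powr (3/2) / g * (\<rho> powr (-4) * (-8)^4 / (ln \<rho>)^4) * \<rho> powr (-4 / ln \<rho>)"
    using a b c g by (intro mult_mono divide_right_mono) auto
  finally show ?thesis .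
qed

lemma steady_coefficient_le:
  fixes \<delta> g c N :: real
  assumes \<delta>: "0 < \<delta>" "\<delta> \<le> 1" and g: "0 < g" "g \<le> 1" and c: "0 \<le> c" and N: "1 \<le> N"
  shows "c / (\<delta> * sqrt \<delta> * g ^ 3) \<le> c * N / (\<delta> powr (9/2) * g powr (11/2))"
proof -
  have "\<delta> powr (9/2) \<le> \<delta> powr (3/2)" by (rule powr_mono') (use \<delta> in auto)
  moreover have "g powr (11/2) \<le> g powr 3" by (rule powr_mono') (use g in auto)
  moreover have "\<delta> powr (3/2) = \<delta> * sqrt \<delta>"
  proof -
    have "\<delta> powr (3/2) = \<delta> powr (1 + 1/2)" by simp
    also have "\<dots> = \<delta> powr 1 * \<delta> powr (1/2)" by (rule powr_add)
    finally show ?thesis using \<delta> by (simp add: powr_half_sqrt)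
  qed
  moreover have "g powr 3 = g ^ 3"
    using g by simp
  ultimately have D: "\<delta> powr (9/2) * g powr (11/2) \<le> \<delta> * sqrt \<delta> * g ^ 3"
    using \<delta> g by (intro mult_mono) auto
  have D0: "0 < \<delta> powr (9/2) * g powr (11/2)" using \<delta> g by simp
  have "c / (\<delta> * sqrt \<delta> * g ^ 3) \<le> c / (\<delta> powr (9/2) * g powr (11/2))"
    using D D0 c by (intro divide_left_mono) auto
  also have "\<dots> \<le> c * N / (\<delta> powr (9/2) * g powr (11/2))"
    using D0 c N by (intro divide_right_mono) (auto simp: mult_le_cancel_left1)
  finally show ?thesis .
qed

type_synonym ('s, 'a) qtable = "'s \<Rightarrow> 'a \<Rightarrow> real"

text \<open>States of the augmented chain: the tables \<open>(QA, QB)\<close> together with the noise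
  components \<open>(zA, zB)\<close> of their errors.\<close>

type_synonym ('s, 'a) aug_state = "(('s, 'a) qtable \<times> ('s, 'a) qtable) \<times> ('s, 'a) qtable \<times> ('s, 'a) qtable"

section \<open>The optimal action values\<close>

locale sdq =
  fixes P :: "'s::finite \<Rightarrow> 'a::finite \<Rightarrow> 's pmf"
    and r :: "'s \<Rightarrow> 'a \<Rightarrow> 's \<Rightarrow> real"
    and d :: "('s \<times> 'a) pmf"
    and amax :: "('a \<Rightarrow> real) \<Rightarrow> 'a"
    and \<alpha> \<gamma> :: real
  assumes alpha: "0 < \<alpha>" "\<alpha> < 1"
    and gamma: "0 < \<gamma>" "\<gamma> < 1"
    and rew: "\<And>s a s'. \<bar>r s a s'\<bar> \<le> 1"
    and d_pos: "\<And>s a. pmf d (s, a) > 0"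
    and amax: "\<And>f b. f b \<le> f (amax f)"
begin

abbreviation Qopt :: "('s, 'a) qtable" where "Qopt \<equiv> Qstar P r \<gamma>"

definition Vopt :: "'s \<Rightarrow> real" where "Vopt s = Qopt s (amax (Qopt s))"

definition qbound :: real where "qbound = 1 / (1 - \<gamma>)"

definition dmin :: real where "dmin = Min (range (pmf d))"

lemma qbound_pos: "0 < qbound"
  unfolding qbound_def using gamma by simp

lemma qbound_ge_1: "1 \<le> qbound"
  unfolding qbound_def using gamma by simp

lemma one_plus_gamma_qbound: "1 + \<gamma> * qbound = qbound"
  unfolding qbound_def using gamma by (simp add: field_simps)

lemma dmin_pos: "0 < dmin"
proof -
  have "dmin \<in> range (pmf d)" unfolding dmin_def by (rule Min_in) auto
  then show ?thesis using d_pos by auto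
qed

lemma dmin_le: "dmin \<le> pmf d (s, a)"
  unfolding dmin_def by (rule Min_le) auto

lemma dmin_le_1: "dmin \<le> 1"
  using dmin_le[of undefined undefined] pmf_le_1[of d] by (meson order_trans)

lemma step_weight_bounds: "\<alpha> * dmin \<le> \<alpha> * pmf d (s, a)" "\<alpha> * pmf d (s, a) \<le> \<alpha>"
  using alpha dmin_le[of s a] pmf_le_1[of d "(s, a)"] by (simp_all add: mult_left_le)

lemma alpha_dmin_bounds: "0 < \<alpha> * dmin" "\<alpha> * dmin < 1"
proof -
  have "\<alpha> * dmin \<le> \<alpha>" using alpha dmin_le_1 by (simp add: mult_left_le)
  then show "\<alpha> * dmin < 1" using alpha by linarith
  show "0 < \<alpha> * dmin" using alpha dmin_pos by simp
qed

lemma bellman_opt_contraction: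
  "supnorm (\<lambda>s a. bellman_opt P r \<gamma> Q s a - bellman_opt P r \<gamma> Q' s a)
     \<le> \<gamma> * supnorm (\<lambda>s a. Q s a - Q' s a)"
proof (rule supnorm_leI)
  fix s a
  have "bellman_opt P r \<gamma> Q s a - bellman_opt P r \<gamma> Q' s a
      = measure_pmf.expectation (P s a)
          (\<lambda>s'. (r s a s' + \<gamma> * Max (range (Q s'))) - (r s a s' + \<gamma> * Max (range (Q' s'))))"
    unfolding bellman_opt_def by (rule Bochner_Integration.integral_diff[symmetric]) simp_all
  also have "\<dots> = measure_pmf.expectation (P s a) (\<lambda>s'. \<gamma> * (Max (range (Q s')) - Max (range (Q' s'))))"
    by (rule arg_cong[where f = "measure_pmf.expectation (P s a)"]) (simp add: fun_eq_iff algebra_simps)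
  also have "\<bar>\<dots>\<bar> \<le> \<gamma> * supnorm (\<lambda>s a. Q s a - Q' s a)"
  proof (rule abs_expectation_le)
    fix s'
    have "\<bar>Max (range (Q s')) - Max (range (Q' s'))\<bar> \<le> supnorm (\<lambda>s a. Q s a - Q' s a)"
      using abs_le_supnorm[of "\<lambda>s a. Q s a - Q' s a"] by (intro abs_Max_range_diff_le) simp
    then show "\<bar>\<gamma> * (Max (range (Q s')) - Max (range (Q' s')))\<bar> \<le> \<gamma> * supnorm (\<lambda>s a. Q s a - Q' s a)"
      using gamma by (simp add: abs_mult mult_left_mono)
  qed simp
  finally show "\<bar>bellman_opt P r \<gamma> Q s a - bellman_opt P r \<gamma> Q' s a\<bar>
      \<le> \<gamma> * supnorm (\<lambda>s a. Q s a - Q' s a)" .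
qed

lemma bellman_opt_Qopt: "bellman_opt P r \<gamma> Qopt = Qopt"
proof -
  have "\<exists>!Q. bellman_opt P r \<gamma> Q = Q"
    using gamma bellman_opt_contraction by (intro supnorm_contraction_has_unique_fixpoint) auto
  then show ?thesis unfolding Qstar_def by (rule theI')
qed

lemma Qopt_le_Vopt: "Qopt s b \<le> Vopt s"
  unfolding Vopt_def by (rule amax)

lemma Qopt_eq: "Qopt s a = measure_pmf.expectation (P s a) (\<lambda>s'. r s a s' + \<gamma> * Vopt s')"
proof -
  have "Max (range (Qopt s')) = Vopt s'" for s'
    unfolding Vopt_def by (rule Max_range_eq_argmax) (rule amax)
  then show ?thesis
    by (subst bellman_opt_Qopt[symmetric]) (simp add: bellman_opt_def)
qed

lemma abs_Qopt_le: "\<bar>Qopt s a\<bar> \<le> qbound"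
proof -
  have "supnorm Qopt \<le> 1 + \<gamma> * supnorm Qopt"
  proof (rule supnorm_leI)
    fix s a
    show "\<bar>Qopt s a\<bar> \<le> 1 + \<gamma> * supnorm Qopt"
      unfolding Qopt_eq[of s a]
    proof (rule abs_expectation_le)
      fix s'
      have "\<bar>\<gamma> * Vopt s'\<bar> \<le> \<gamma> * supnorm Qopt"
        using gamma abs_le_supnorm[of Qopt] by (simp add: Vopt_def abs_mult mult_left_mono)
      then show "\<bar>r s a s' + \<gamma> * Vopt s'\<bar> \<le> 1 + \<gamma> * supnorm Qopt"
        using rew[of s a s'] by linarith
    qed simp
  qed
  then have "supnorm Qopt \<le> qbound"
    using gamma by (simp add: qbound_def field_simps)
  then show ?thesis using abs_le_supnorm[of Qopt s a] by linarith
qed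

section \<open>Decomposition of an SDQ step\<close>

abbreviation Esample :: "('s \<times> 'a \<times> 's \<Rightarrow> real) \<Rightarrow> real" where
  "Esample f \<equiv> measure_pmf.expectation (sample_pmf d P) f"

lemma expectation_sample_pmf:
  "Esample f = (\<Sum>(s, a)\<in>UNIV. pmf d (s, a) * measure_pmf.expectation (P s a) (\<lambda>s'. f (s, a, s')))"
proof -
  have "Esample f = measure_pmf.expectation d
      (\<lambda>(s, a). measure_pmf.expectation (map_pmf (\<lambda>s'. (s, a, s')) (P s a)) f)"
    unfolding sample_pmf_def
    by (subst expectation_bind_pmf_finite) (simp_all add: case_prod_beta')
  then show ?thesis by (simp add: expectation_finite_type[of d] case_prod_beta')
qed

definition td_error :: "('s, 'a) qtable \<Rightarrow> ('s \<Rightarrow> real) \<Rightarrow> 's \<Rightarrow> 'a \<Rightarrow> 's \<Rightarrow> real" where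
  "td_error Q u s a s' = r s a s' + \<gamma> * u s' - Q s a"

definition double_target :: "('s, 'a) qtable \<Rightarrow> ('s, 'a) qtable \<Rightarrow> 's \<Rightarrow> real" where
  "double_target Q Q' s' = Q s' (amax (Q' s'))"

fun sampled_td_error ::
  "('s, 'a) qtable \<Rightarrow> ('s \<Rightarrow> real) \<Rightarrow> 's \<times> 'a \<times> 's \<Rightarrow> ('s, 'a) qtable" where
  "sampled_td_error Q u (s, a, s') s1 a1 = (if (s1, a1) = (s, a) then td_error Q u s a s' else 0)"

definition table_update ::
  "('s, 'a) qtable \<Rightarrow> ('s \<Rightarrow> real) \<Rightarrow> 's \<times> 'a \<times> 's \<Rightarrow> ('s, 'a) qtable" where
  "table_update Q u \<xi> s a = Q s a + \<alpha> * sampled_td_error Q u \<xi> s a"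

definition mean_td_error :: "('s, 'a) qtable \<Rightarrow> ('s \<Rightarrow> real) \<Rightarrow> ('s, 'a) qtable" where
  "mean_td_error Q u s a =
     pmf d (s, a) * (measure_pmf.expectation (P s a) (\<lambda>s'. r s a s' + \<gamma> * u s') - Q s a)"

text \<open>Subtracting this noise from a table leaves a residual that evolves without
  sampling noise, see \<open>residual_update\<close>.\<close>

definition noise_update ::
  "('s, 'a) qtable \<Rightarrow> ('s, 'a) qtable \<Rightarrow> ('s \<Rightarrow> real) \<Rightarrow> 's \<times> 'a \<times> 's \<Rightarrow> ('s, 'a) qtable" where
  "noise_update z Q u \<xi> s a =
     (1 - \<alpha> * pmf d (s, a)) * z s a + \<alpha> * (sampled_td_error Q u \<xi> s a - mean_td_error Q u s a)"

lemma sdq_step_eq: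
  "sdq_step amax \<alpha> \<gamma> r (QA, QB) \<xi>
     = (table_update QA (double_target QA QB) \<xi>, table_update QB (double_target QB QA) \<xi>)"
  by (cases \<xi>) (auto simp: sdq_step_def table_update_def td_error_def double_target_def fun_eq_iff)

lemma expectation_sampled_td_error: "Esample (\<lambda>\<xi>. sampled_td_error Q u \<xi> s a) = mean_td_error Q u s a"
proof -
  have if_zero: "measure_pmf.expectation M (\<lambda>x. if c then f x else 0) = (if c then measure_pmf.expectation M f else 0)"
    for M :: "'s pmf" and c and f :: "'s \<Rightarrow> real"
    by simp
  have "Esample (\<lambda>\<xi>. sampled_td_error Q u \<xi> s a)
      = (\<Sum>\<sigma>\<in>UNIV. if \<sigma> = (s, a) then pmf d (s, a) * measure_pmf.expectation (P s a) (td_error Q u s a) else 0)"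
    unfolding expectation_sample_pmf by (intro sum.cong) (auto simp: if_zero split: if_splits)
  also have "\<dots> = mean_td_error Q u s a"
    by (simp add: mean_td_error_def td_error_def[abs_def])
  finally show ?thesis .
qed

lemma sum_sq_sampled_td_error:
  "(\<Sum>(s1, a1)\<in>UNIV. (sampled_td_error Q u (s, a, s') s1 a1)\<^sup>2) = (td_error Q u s a s')\<^sup>2"
proof -
  have "(\<Sum>(s1, a1)\<in>UNIV. (sampled_td_error Q u (s, a, s') s1 a1)\<^sup>2)
      = (\<Sum>\<sigma>\<in>UNIV. if \<sigma> = (s, a) then (td_error Q u s a s')\<^sup>2 else 0)"
    by (intro sum.cong) (auto split: if_splits)
  then show ?thesis by simp
qed

fun aug_step :: "('s, 'a) aug_state \<Rightarrow> 's \<times> 'a \<times> 's \<Rightarrow> ('s, 'a) aug_state" where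
  "aug_step ((QA, QB), (zA, zB)) \<xi> =
     ((table_update QA (double_target QA QB) \<xi>, table_update QB (double_target QB QA) \<xi>),
      (noise_update zA QA (double_target QA QB) \<xi>, noise_update zB QB (double_target QB QA) \<xi>))"

lemma fst_aug_step: "fst (aug_step st \<xi>) = sdq_step amax \<alpha> \<gamma> r (fst st) \<xi>"
proof -
  obtain QA QB zA zB where "st = ((QA, QB), (zA, zB))" by (metis prod.exhaust)
  then show ?thesis by (simp add: sdq_step_eq)
qed

lemma abs_td_error_le:
  assumes "\<And>s a. \<bar>Q s a\<bar> \<le> qbound" "\<And>s a. \<bar>Q' s a\<bar> \<le> qbound"
  shows "\<bar>td_error Q (double_target Q Q') s a s'\<bar> \<le> 2 * qbound"
proof -
  have "\<bar>\<gamma> * Q s' (amax (Q' s'))\<bar> \<le> \<gamma> * qbound"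
    using gamma assms(1) by (simp add: abs_mult mult_left_mono)
  then show ?thesis
    using rew[of s a s'] assms(1)[of s a] one_plus_gamma_qbound
    unfolding td_error_def double_target_def by linarith
qed

lemma abs_table_update_le:
  assumes "\<And>s a. \<bar>Q s a\<bar> \<le> qbound" "\<And>s a. \<bar>Q' s a\<bar> \<le> qbound"
  shows "\<bar>table_update Q (double_target Q Q') \<xi> s a\<bar> \<le> qbound"
proof -
  obtain s0 a0 s' where \<xi>: "\<xi> = (s0, a0, s')" by (cases \<xi>) auto
  show ?thesis
  proof (cases "(s, a) = (s0, a0)")
    case True
    have "\<bar>\<gamma> * Q s' (amax (Q' s'))\<bar> \<le> \<gamma> * qbound"
      using gamma assms(1) by (simp add: abs_mult mult_left_mono)
    then have "\<bar>r s a s' + \<gamma> * Q s' (amax (Q' s'))\<bar> \<le> qbound"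
      using rew[of s a s'] one_plus_gamma_qbound by linarith
    then have "\<bar>\<alpha> * (r s a s' + \<gamma> * Q s' (amax (Q' s')))\<bar> \<le> \<alpha> * qbound"
      using alpha by (simp add: abs_mult mult_left_mono)
    moreover have "\<bar>(1 - \<alpha>) * Q s a\<bar> \<le> (1 - \<alpha>) * qbound"
      using alpha assms(1)[of s a] by (simp add: abs_mult mult_left_mono)
    moreover have "table_update Q (double_target Q Q') \<xi> s a
        = (1 - \<alpha>) * Q s a + \<alpha> * (r s a s' + \<gamma> * Q s' (amax (Q' s')))"
      using True by (simp add: \<xi> table_update_def td_error_def double_target_def algebra_simps)
    ultimately show ?thesis by (simp add: algebra_simps)
  next
    case False
    then show ?thesis using assms(1) by (auto simp: \<xi> table_update_def)
  qed
qed

section \<open>The noise\<close>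

lemma expectation_sq_noise_update_le:
  "Esample (\<lambda>\<xi>. (noise_update z Q u \<xi> s a)\<^sup>2)
     \<le> (1 - \<alpha> * dmin) * (z s a)\<^sup>2 + \<alpha>\<^sup>2 * Esample (\<lambda>\<xi>. (sampled_td_error Q u \<xi> s a)\<^sup>2)"
proof -
  have "0 \<le> 1 - \<alpha> * pmf d (s, a)" "1 - \<alpha> * pmf d (s, a) \<le> 1 - \<alpha> * dmin"
    using step_weight_bounds[of s a] alpha by linarith+
  then have "(1 - \<alpha> * pmf d (s, a))\<^sup>2 \<le> 1 - \<alpha> * dmin"
    using mult_left_le[of "1 - \<alpha> * pmf d (s, a)" "1 - \<alpha> * pmf d (s, a)"] alpha_dmin_bounds
      step_weight_bounds[of s a] by (simp add: power2_eq_square)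
  then have "((1 - \<alpha> * pmf d (s, a)) * z s a)\<^sup>2 \<le> (1 - \<alpha> * dmin) * (z s a)\<^sup>2"
    unfolding power_mult_distrib by (rule mult_right_mono) simp
  moreover have "Esample (\<lambda>\<xi>. (noise_update z Q u \<xi> s a)\<^sup>2)
      \<le> ((1 - \<alpha> * pmf d (s, a)) * z s a)\<^sup>2 + \<alpha>\<^sup>2 * Esample (\<lambda>\<xi>. (sampled_td_error Q u \<xi> s a)\<^sup>2)"
    unfolding noise_update_def by (rule expectation_affine_sq_le) (rule expectation_sampled_td_error)
  ultimately show ?thesis by linarith
qed

lemma expectation_sqnorm_noise_update_le:
  assumes td: "\<And>s a s'. \<bar>td_error Q u s a s'\<bar> \<le> B"
  shows "Esample (\<lambda>\<xi>. sqnorm (noise_update z Q u \<xi>)) \<le> (1 - \<alpha> * dmin) * sqnorm z + \<alpha>\<^sup>2 * B\<^sup>2"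
proof -
  have "Esample (\<lambda>\<xi>. sqnorm (noise_update z Q u \<xi>))
      = (\<Sum>(s, a)\<in>UNIV. Esample (\<lambda>\<xi>. (noise_update z Q u \<xi> s a)\<^sup>2))"
    unfolding sqnorm_def by (subst Bochner_Integration.integral_sum) (simp_all add: case_prod_beta')
  also have "\<dots> \<le> (\<Sum>(s, a)\<in>UNIV. (1 - \<alpha> * dmin) * (z s a)\<^sup>2
                     + \<alpha>\<^sup>2 * Esample (\<lambda>\<xi>. (sampled_td_error Q u \<xi> s a)\<^sup>2))"
    using expectation_sq_noise_update_le by (intro sum_mono) (simp add: case_prod_beta')
  also have "\<dots> = (1 - \<alpha> * dmin) * sqnorm z
      + \<alpha>\<^sup>2 * Esample (\<lambda>\<xi>. \<Sum>(s, a)\<in>UNIV. (sampled_td_error Q u \<xi> s a)\<^sup>2)"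
    unfolding sqnorm_def
    by (subst Bochner_Integration.integral_sum) (simp_all add: case_prod_beta' sum.distrib sum_distrib_left)
  also have "Esample (\<lambda>\<xi>. \<Sum>(s, a)\<in>UNIV. (sampled_td_error Q u \<xi> s a)\<^sup>2) \<le> Esample (\<lambda>_. B\<^sup>2)"
  proof (rule expectation_mono_finite)
    fix \<xi> :: "'s \<times> 'a \<times> 's"
    obtain s a s' where \<xi>: "\<xi> = (s, a, s')" by (cases \<xi>) auto
    have "\<bar>td_error Q u s a s'\<bar> \<le> \<bar>B\<bar>" using td[of s a s'] by linarith
    then show "(\<Sum>(s, a)\<in>UNIV. (sampled_td_error Q u \<xi> s a)\<^sup>2) \<le> B\<^sup>2"
      unfolding \<xi> sum_sq_sampled_td_error by (simp add: abs_le_square_iff)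
  qed simp
  finally show ?thesis by (simp add: mult_left_mono)
qed

fun noise_energy :: "('s, 'a) aug_state \<Rightarrow> real" where
  "noise_energy (QQ, (zA, zB)) = sqnorm zA + sqnorm zB"

fun noise_norm :: "('s, 'a) aug_state \<Rightarrow> real" where
  "noise_norm (QQ, (zA, zB)) = supnorm zA + supnorm zB"

lemma noise_energy_aug_step_le:
  assumes "\<And>s a. \<bar>fst (fst st) s a\<bar> \<le> qbound" "\<And>s a. \<bar>snd (fst st) s a\<bar> \<le> qbound"
  shows "Esample (\<lambda>\<xi>. noise_energy (aug_step st \<xi>))
           \<le> (1 - \<alpha> * dmin) * noise_energy st + 2 * (\<alpha>\<^sup>2 * (2 * qbound)\<^sup>2)"
proof -
  obtain QA QB zA zB where st: "st = ((QA, QB), (zA, zB))" by (metis prod.exhaust)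
  have "Esample (\<lambda>\<xi>. noise_energy (aug_step st \<xi>))
      = Esample (\<lambda>\<xi>. sqnorm (noise_update zA QA (double_target QA QB) \<xi>))
        + Esample (\<lambda>\<xi>. sqnorm (noise_update zB QB (double_target QB QA) \<xi>))"
    by (simp add: st)
  also have "\<dots> \<le> ((1 - \<alpha> * dmin) * sqnorm zA + \<alpha>\<^sup>2 * (2 * qbound)\<^sup>2)
                 + ((1 - \<alpha> * dmin) * sqnorm zB + \<alpha>\<^sup>2 * (2 * qbound)\<^sup>2)"
    using assms abs_td_error_le by (intro add_mono expectation_sqnorm_noise_update_le) (simp_all add: st)
  finally show ?thesis by (simp add: st algebra_simps)
qed

text \<open>Young's inequality \<open>2 t x \<le> x\<^sup>2 + t\<^sup>2\<close> replaces Jensen's inequality when passing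
  from the expected energy to the expected sup norm.\<close>

lemma noise_norm_le_energy:
  assumes "0 < t"
  shows "noise_norm st \<le> noise_energy st / t + t / 2"
proof -
  obtain QQ zA zB where st: "st = (QQ, (zA, zB))" by (metis prod.exhaust)
  have "(supnorm zA + supnorm zB)\<^sup>2 \<le> 2 * ((supnorm zA)\<^sup>2 + (supnorm zB)\<^sup>2)"
    using sum_squares_ge_zero[of "supnorm zA - supnorm zB" 0] by (simp add: power2_eq_square algebra_simps)
  also have "\<dots> \<le> 2 * noise_energy st"
    using supnorm_sq_le_sqnorm[of zA] supnorm_sq_le_sqnorm[of zB] by (simp add: st)
  finally have "(noise_norm st)\<^sup>2 \<le> 2 * noise_energy st" by (simp add: st)
  moreover have "2 * t * noise_norm st \<le> (noise_norm st)\<^sup>2 + t\<^sup>2"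
    using sum_squares_ge_zero[of "noise_norm st - t" 0] by (simp add: power2_eq_square algebra_simps)
  ultimately show ?thesis using assms by (simp add: field_simps power2_eq_square)
qed

definition noise_bound :: real where "noise_bound = 4 * qbound * sqrt (\<alpha> / dmin)"

lemma noise_bound_pos: "0 < noise_bound"
  unfolding noise_bound_def using qbound_pos alpha dmin_pos by simp

section \<open>The residual\<close>

definition residual :: "('s, 'a) qtable \<Rightarrow> ('s, 'a) qtable \<Rightarrow> ('s, 'a) qtable" where
  "residual Q z s a = Q s a - Qopt s a - z s a"

lemma residual_update:
  "residual (table_update Q u \<xi>) (noise_update z Q u \<xi>) s a
   = (1 - \<alpha> * pmf d (s, a)) * residual Q z s a
     + \<alpha> * pmf d (s, a) * \<gamma> * measure_pmf.expectation (P s a) (\<lambda>s'. u s' - Vopt s')"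
proof -
  have "measure_pmf.expectation (P s a) (\<lambda>s'. r s a s' + \<gamma> * u s')
      = measure_pmf.expectation (P s a) (r s a) + \<gamma> * measure_pmf.expectation (P s a) u"
    "measure_pmf.expectation (P s a) (\<lambda>s'. r s a s' + \<gamma> * Vopt s')
      = measure_pmf.expectation (P s a) (r s a) + \<gamma> * measure_pmf.expectation (P s a) Vopt"
    "measure_pmf.expectation (P s a) (\<lambda>s'. u s' - Vopt s')
      = measure_pmf.expectation (P s a) u - measure_pmf.expectation (P s a) Vopt"
    by simp_all
  then show ?thesis
    unfolding residual_def table_update_def noise_update_def mean_td_error_def Qopt_eq[of s a]
    by (simp add: algebra_simps)
qed

text \<open>The overestimate is controlled by the error of \<open>QA\<close> at the greedy action of \<open>QB\<close>,
  the underestimate by the error of \<open>QB\<close> at the optimal action plus the gap \<open>QA - QB\<close>.\<close>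

lemma abs_double_target_minus_Vopt_le:
  "\<bar>double_target QA QB s' - Vopt s'\<bar>
   \<le> max (supnorm (\<lambda>s a. QA s a - Qopt s a)) (supnorm (\<lambda>s a. QB s a - Qopt s a))
     + supnorm (\<lambda>s a. QA s a - QB s a)"
proof -
  let ?b = "amax (QB s')" and ?b' = "amax (Qopt s')"
  have "QA s' ?b - Qopt s' ?b \<le> supnorm (\<lambda>s a. QA s a - Qopt s a)"
    "Qopt s' ?b' - QB s' ?b' \<le> supnorm (\<lambda>s a. QB s a - Qopt s a)"
    "QB s' ?b - QA s' ?b \<le> supnorm (\<lambda>s a. QA s a - QB s a)"
    using abs_le_supnorm[of "\<lambda>s a. QA s a - Qopt s a" s' ?b]
      abs_le_supnorm[of "\<lambda>s a. QB s a - Qopt s a" s' ?b']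
      abs_le_supnorm[of "\<lambda>s a. QA s a - QB s a" s' ?b] by simp_all
  moreover have "Qopt s' ?b \<le> Vopt s'" "QB s' ?b' \<le> QB s' ?b" "Vopt s' = Qopt s' ?b'"
    by (simp_all add: Qopt_le_Vopt amax Vopt_def)
  moreover have "0 \<le> supnorm (\<lambda>s a. QA s a - QB s a)" by (rule supnorm_nonneg)
  ultimately show ?thesis unfolding double_target_def by (simp add: abs_le_iff) linarith
qed

lemma abs_double_target_diff_le:
  "\<bar>double_target QA QB s' - double_target QB QA s'\<bar> \<le> supnorm (\<lambda>s a. QA s a - QB s a)"
proof -
  let ?bA = "amax (QA s')" and ?bB = "amax (QB s')" and ?S = "supnorm (\<lambda>s a. QA s a - QB s a)"
  have "QA s' ?bB \<le> QA s' ?bA" "QB s' ?bA \<le> QB s' ?bB" by (rule amax)+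
  moreover have "QA s' ?bA - QB s' ?bA \<le> ?S" "QB s' ?bB - QA s' ?bB \<le> ?S"
    using abs_le_supnorm[of "\<lambda>s a. QA s a - QB s a" s' ?bA]
      abs_le_supnorm[of "\<lambda>s a. QA s a - QB s a" s' ?bB] by (simp_all add: abs_le_iff)
  ultimately have "QA s' ?bB - QB s' ?bA \<le> ?S" "- ?S \<le> QA s' ?bB - QB s' ?bA" by linarith+
  then show ?thesis unfolding double_target_def by (simp add: abs_le_iff)
qed

definition gap_weight :: real where "gap_weight = 4 / (1 - \<gamma>)"

definition rate :: real where "rate = 1 - 3 / 4 * (\<alpha> * dmin) * (1 - \<gamma>)"

definition noise_gain :: real where "noise_gain = \<alpha> * \<gamma> * (2 + gap_weight)"

lemma gap_weight_pos: "0 < gap_weight"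
  unfolding gap_weight_def using gamma by simp

lemma noise_gain_nonneg: "0 \<le> noise_gain"
  unfolding noise_gain_def using alpha gamma gap_weight_pos by simp

lemma rate_bounds: "0 < rate" "rate < 1" "1 - rate = 3 / 4 * (\<alpha> * dmin) * (1 - \<gamma>)"
proof -
  have "(\<alpha> * dmin) * (1 - \<gamma>) \<le> 1"
    using alpha_dmin_bounds gamma by (simp add: mult_le_one)
  moreover have "0 < (\<alpha> * dmin) * (1 - \<gamma>)"
    using alpha_dmin_bounds gamma by simp
  ultimately show "0 < rate" "rate < 1" "1 - rate = 3 / 4 * (\<alpha> * dmin) * (1 - \<gamma>)"
    unfolding rate_def by auto
qed

lemma rate_ge:
  assumes "\<alpha> * dmin \<le> e"
  shows "1 - e * (1 - \<gamma>) + e * (1 - \<gamma>) / 4 \<le> rate"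
proof -
  have "\<alpha> * dmin * (1 - \<gamma>) \<le> e * (1 - \<gamma>)"
    using assms gamma by (simp add: mult_right_mono)
  then show ?thesis unfolding rate_def by linarith
qed

lemma noise_gain_ge:
  assumes "e \<le> \<alpha>"
  shows "2 * e * \<gamma> + e * \<gamma> * gap_weight \<le> noise_gain"
proof -
  have "2 * e * \<gamma> + e * \<gamma> * gap_weight = e * (\<gamma> * (2 + gap_weight))"
    by (simp add: algebra_simps)
  also have "\<dots> \<le> \<alpha> * (\<gamma> * (2 + gap_weight))"
    by (rule mult_right_mono[OF assms]) (use gamma gap_weight_pos in simp)
  finally show ?thesis unfolding noise_gain_def by (simp add: mult.assoc)
qed

lemma damped_step_le:
  assumes e: "\<alpha> * dmin \<le> e" "e \<le> \<alpha>" and YZ: "0 \<le> Y" "0 \<le> Z"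
    and y: "\<bar>y\<bar> \<le> Y" and g: "\<bar>g\<bar> \<le> (1 + 1 / gap_weight) * Y + 2 * Z"
  shows "\<bar>(1 - e) * y + e * \<gamma> * g\<bar> \<le> rate * Y + noise_gain * Z"
proof -
  have e01: "0 \<le> e" "e \<le> 1" using e alpha alpha_dmin_bounds by linarith+
  have "\<bar>(1 - e) * y + e * \<gamma> * g\<bar> \<le> (1 - e) * \<bar>y\<bar> + e * \<gamma> * \<bar>g\<bar>"
    using e01 gamma abs_triangle_ineq[of "(1 - e) * y" "e * \<gamma> * g"] by (simp add: abs_mult)
  also have "\<dots> \<le> (1 - e) * Y + e * \<gamma> * ((1 + 1 / gap_weight) * Y + 2 * Z)"
    using e01 gamma y g by (intro add_mono mult_left_mono) auto
  also have "\<dots> = (1 - e * (1 - \<gamma>) + e * \<gamma> * (1 - \<gamma>) / 4) * Y + (2 * e * \<gamma>) * Z"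
    unfolding gap_weight_def using gamma by (simp add: field_simps)
  also have "\<dots> \<le> rate * Y + noise_gain * Z"
  proof (intro add_mono mult_right_mono)
    have "e * \<gamma> \<le> e" using e01 gamma by (simp add: mult_left_le)
    then have "e * \<gamma> * (1 - \<gamma>) \<le> e * (1 - \<gamma>)" using gamma by (simp add: mult_right_mono)
    then show "1 - e * (1 - \<gamma>) + e * \<gamma> * (1 - \<gamma>) / 4 \<le> rate"
      using rate_ge[OF e(1)] by linarith
    have "0 \<le> e * \<gamma> * gap_weight" using e01 gamma gap_weight_pos by simp
    then show "2 * e * \<gamma> \<le> noise_gain" using noise_gain_ge[OF e(2)] by linarith
  qed (use YZ in auto)
  finally show ?thesis .
qed

lemma damped_gap_step_le:
  assumes e: "\<alpha> * dmin \<le> e" "e \<le> \<alpha>" and YZ: "0 \<le> Y" "0 \<le> Z"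
    and y: "gap_weight * \<bar>y\<bar> \<le> Y" and g: "\<bar>g\<bar> \<le> Y / gap_weight + Z"
  shows "gap_weight * \<bar>(1 - e) * y + e * \<gamma> * g\<bar> \<le> rate * Y + noise_gain * Z"
proof -
  have e01: "0 \<le> e" "e \<le> 1" using e alpha alpha_dmin_bounds by linarith+
  have "\<bar>(1 - e) * y + e * \<gamma> * g\<bar> \<le> (1 - e) * \<bar>y\<bar> + e * \<gamma> * \<bar>g\<bar>"
    using e01 gamma abs_triangle_ineq[of "(1 - e) * y" "e * \<gamma> * g"] by (simp add: abs_mult)
  then have "gap_weight * \<bar>(1 - e) * y + e * \<gamma> * g\<bar> \<le> gap_weight * ((1 - e) * \<bar>y\<bar> + e * \<gamma> * \<bar>g\<bar>)"
    using gap_weight_pos by (simp add: mult_left_mono)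
  also have "\<dots> = (1 - e) * (gap_weight * \<bar>y\<bar>) + e * \<gamma> * (gap_weight * \<bar>g\<bar>)"
    by (simp add: algebra_simps)
  also have "\<dots> \<le> (1 - e) * Y + e * \<gamma> * (Y + gap_weight * Z)"
    using e01 gamma y g gap_weight_pos by (intro add_mono mult_left_mono) (auto simp: field_simps)
  also have "\<dots> = (1 - e * (1 - \<gamma>)) * Y + (e * \<gamma> * gap_weight) * Z"
    by (simp add: algebra_simps)
  also have "\<dots> \<le> rate * Y + noise_gain * Z"
  proof (intro add_mono mult_right_mono)
    have "0 \<le> e * (1 - \<gamma>)" using e01 gamma by simp
    then show "1 - e * (1 - \<gamma>) \<le> rate" using rate_ge[OF e(1)] by linarith
    have "0 \<le> 2 * e * \<gamma>" using e01 gamma by simp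
    then show "e * \<gamma> * gap_weight \<le> noise_gain" using noise_gain_ge[OF e(2)] by linarith
  qed (use YZ in auto)
  finally show ?thesis .
qed

fun residual_norm :: "('s, 'a) aug_state \<Rightarrow> real" where
  "residual_norm ((QA, QB), (zA, zB)) =
     max (max (supnorm (residual QA zA)) (supnorm (residual QB zB)))
         (gap_weight * supnorm (\<lambda>s a. residual QA zA s a - residual QB zB s a))"

lemma supnorm_error_le_residual:
  assumes "\<And>s a. \<bar>residual Q z s a\<bar> \<le> Y" "supnorm z \<le> Z"
  shows "supnorm (\<lambda>s a. Q s a - Qopt s a) \<le> Y + Z"
proof (rule supnorm_leI)
  fix s a
  have "Q s a - Qopt s a = residual Q z s a + z s a" unfolding residual_def by simp
  then show "\<bar>Q s a - Qopt s a\<bar> \<le> Y + Z"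
    using assms(1)[of s a] abs_le_supnorm[of z s a] assms(2) by linarith
qed

lemma supnorm_gap_le_residual:
  assumes "\<And>s a. gap_weight * \<bar>residual QA zA s a - residual QB zB s a\<bar> \<le> Y"
    and "supnorm zA + supnorm zB \<le> Z"
  shows "supnorm (\<lambda>s a. QA s a - QB s a) \<le> Y / gap_weight + Z"
proof (rule supnorm_leI)
  fix s a
  have "QA s a - QB s a = (residual QA zA s a - residual QB zB s a) + zA s a - zB s a"
    unfolding residual_def by simp
  moreover have "\<bar>residual QA zA s a - residual QB zB s a\<bar> \<le> Y / gap_weight"
    using assms(1)[of s a] gap_weight_pos by (simp add: field_simps)
  ultimately show "\<bar>QA s a - QB s a\<bar> \<le> Y / gap_weight + Z"
    using abs_le_supnorm[of zA s a] abs_le_supnorm[of zB s a] assms(2) by linarith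
qed

text \<open>The hypotheses are symmetric in the two tables, so the lemma also bounds the
  update of \<open>QB\<close>.\<close>

lemma abs_residual_update_le:
  assumes YA: "\<And>s a. \<bar>residual QA zA s a\<bar> \<le> Y" and YB: "\<And>s a. \<bar>residual QB zB s a\<bar> \<le> Y"
    and gap: "\<And>s a. gap_weight * \<bar>residual QA zA s a - residual QB zB s a\<bar> \<le> Y"
    and Z: "supnorm zA + supnorm zB \<le> Z"
  shows "\<bar>residual (table_update QA (double_target QA QB) \<xi>)
            (noise_update zA QA (double_target QA QB) \<xi>) s a\<bar> \<le> rate * Y + noise_gain * Z"
proof -
  have "supnorm zA \<le> Z" "supnorm zB \<le> Z"
    using Z supnorm_nonneg[of zA] supnorm_nonneg[of zB] by linarith+
  then have "supnorm (\<lambda>s a. QA s a - Qopt s a) \<le> Y + Z" "supnorm (\<lambda>s a. QB s a - Qopt s a) \<le> Y + Z"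
    using supnorm_error_le_residual[OF YA] supnorm_error_le_residual[OF YB] by simp_all
  moreover have "supnorm (\<lambda>s a. QA s a - QB s a) \<le> Y / gap_weight + Z"
    using gap Z by (rule supnorm_gap_le_residual)
  ultimately have "\<bar>double_target QA QB s' - Vopt s'\<bar> \<le> (1 + 1 / gap_weight) * Y + 2 * Z" for s'
    using abs_double_target_minus_Vopt_le[of QA QB s'] by (simp add: algebra_simps)
  then have "\<bar>measure_pmf.expectation (P s a) (\<lambda>s'. double_target QA QB s' - Vopt s')\<bar>
      \<le> (1 + 1 / gap_weight) * Y + 2 * Z"
    by (intro abs_expectation_le) simp_all
  moreover have "0 \<le> Y" "0 \<le> Z"
    using YA[of s a] Z supnorm_nonneg[of zA] supnorm_nonneg[of zB] by linarith+
  ultimately show ?thesis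
    unfolding residual_update using step_weight_bounds[of s a] YA[of s a]
    by (intro damped_step_le) (simp_all add: mult.assoc)
qed

lemma abs_residual_gap_update_le:
  assumes YA: "\<And>s a. \<bar>residual QA zA s a\<bar> \<le> Y"
    and gap: "\<And>s a. gap_weight * \<bar>residual QA zA s a - residual QB zB s a\<bar> \<le> Y"
    and Z: "supnorm zA + supnorm zB \<le> Z"
  shows "gap_weight *
      \<bar>residual (table_update QA (double_target QA QB) \<xi>) (noise_update zA QA (double_target QA QB) \<xi>) s a
       - residual (table_update QB (double_target QB QA) \<xi>) (noise_update zB QB (double_target QB QA) \<xi>) s a\<bar>
    \<le> rate * Y + noise_gain * Z"
proof -
  let ?e = "\<alpha> * pmf d (s, a)"
  let ?g = "measure_pmf.expectation (P s a) (\<lambda>s'. double_target QA QB s' - double_target QB QA s')"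
  have "\<bar>double_target QA QB s' - double_target QB QA s'\<bar> \<le> Y / gap_weight + Z" for s'
    using abs_double_target_diff_le supnorm_gap_le_residual[OF gap Z] order_trans by blast
  then have "\<bar>?g\<bar> \<le> Y / gap_weight + Z"
    by (intro abs_expectation_le) simp_all
  moreover have "0 \<le> Y" "0 \<le> Z"
    using YA[of s a] Z supnorm_nonneg[of zA] supnorm_nonneg[of zB] by linarith+
  moreover have "residual (table_update QA (double_target QA QB) \<xi>) (noise_update zA QA (double_target QA QB) \<xi>) s a
       - residual (table_update QB (double_target QB QA) \<xi>) (noise_update zB QB (double_target QB QA) \<xi>) s a
      = (1 - ?e) * (residual QA zA s a - residual QB zB s a) + ?e * \<gamma> * ?g"
    unfolding residual_update by (simp add: algebra_simps)
  ultimately show ?thesis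
    using step_weight_bounds[of s a] gap[of s a] by (simp add: damped_gap_step_le)
qed

lemma residual_norm_aug_step_le:
  "residual_norm (aug_step st \<xi>) \<le> rate * residual_norm st + noise_gain * noise_norm st"
proof -
  obtain QA QB zA zB where st: "st = ((QA, QB), (zA, zB))" by (metis prod.exhaust)
  define Y where "Y = residual_norm st"
  define Z where "Z = noise_norm st"
  have YA: "\<bar>residual QA zA s a\<bar> \<le> Y" and YB: "\<bar>residual QB zB s a\<bar> \<le> Y" for s a
    using abs_le_supnorm[of "residual QA zA" s a] abs_le_supnorm[of "residual QB zB" s a]
    unfolding Y_def st by auto
  have gap: "gap_weight * \<bar>residual QA zA s a - residual QB zB s a\<bar> \<le> Y" for s a
    using abs_le_supnorm[of "\<lambda>s a. residual QA zA s a - residual QB zB s a" s a] gap_weight_pos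
    unfolding Y_def st by (auto intro: order_trans[OF mult_left_mono])
  then have gap': "gap_weight * \<bar>residual QB zB s a - residual QA zA s a\<bar> \<le> Y" for s a
    by (simp add: abs_minus_commute)
  have Z: "supnorm zA + supnorm zB \<le> Z" "supnorm zB + supnorm zA \<le> Z"
    unfolding Z_def st by simp_all
  define RA where "RA = residual (table_update QA (double_target QA QB) \<xi>) (noise_update zA QA (double_target QA QB) \<xi>)"
  define RB where "RB = residual (table_update QB (double_target QB QA) \<xi>) (noise_update zB QB (double_target QB QA) \<xi>)"
  have "supnorm (\<lambda>s a. RA s a - RB s a) \<le> (rate * Y + noise_gain * Z) / gap_weight"
  proof (rule supnorm_leI)
    fix s a
    show "\<bar>RA s a - RB s a\<bar> \<le> (rate * Y + noise_gain * Z) / gap_weight"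
      using abs_residual_gap_update_le[OF YA gap Z(1), of \<xi> s a] gap_weight_pos
      unfolding RA_def RB_def by (simp add: field_simps)
  qed
  then have "gap_weight * supnorm (\<lambda>s a. RA s a - RB s a) \<le> rate * Y + noise_gain * Z"
    using gap_weight_pos by (simp add: field_simps)
  moreover have "supnorm RA \<le> rate * Y + noise_gain * Z" "supnorm RB \<le> rate * Y + noise_gain * Z"
    unfolding RA_def RB_def
    using abs_residual_update_le[OF YA YB gap Z(1)] abs_residual_update_le[OF YB YA gap' Z(2)]
    by (simp_all add: supnorm_leI)
  moreover have "residual_norm (aug_step st \<xi>)
      = max (max (supnorm RA) (supnorm RB)) (gap_weight * supnorm (\<lambda>s a. RA s a - RB s a))"
    by (simp add: st RA_def RB_def)
  ultimately show ?thesis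
    unfolding Y_def[symmetric] Z_def[symmetric] by simp
qed

definition rho :: real where "rho = 1 - \<alpha> * dmin * (1 - \<gamma>)"

lemma rho_bounds: "0 < rho" "rho < 1"
proof -
  have "\<alpha> * dmin * (1 - \<gamma>) \<le> \<alpha> * dmin" "0 < \<alpha> * dmin * (1 - \<gamma>)"
    using alpha_dmin_bounds gamma by (simp_all add: mult_left_le)
  then show "0 < rho" "rho < 1" unfolding rho_def using alpha_dmin_bounds by linarith+
qed

lemma rate_pow_le_rho_powr:
  assumes "\<alpha> \<le> 8 / 9"
  shows "rate ^ k \<le> rho powr (real k / 2)"
proof -
  define x where "x = \<alpha> * dmin * (1 - \<gamma>)"
  have "\<alpha> * dmin * (1 - \<gamma>) \<le> \<alpha> * dmin" "\<alpha> * dmin \<le> \<alpha>"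
    using alpha_dmin_bounds gamma alpha dmin_le_1 by (simp_all add: mult_left_le)
  then have "x \<le> 8 / 9" using assms unfolding x_def by linarith
  moreover have "0 \<le> x" using alpha dmin_pos gamma unfolding x_def by simp
  ultimately have "0 \<le> x * (8 - 9 * x) / 16" by simp
  moreover have "rho - rate\<^sup>2 = x * (8 - 9 * x) / 16"
    unfolding rate_def rho_def x_def by (simp add: power2_eq_square field_simps)
  ultimately have "rate\<^sup>2 \<le> rho" by linarith
  have "rate ^ k = rate powr (real k)"
    using rate_bounds by (simp add: powr_realpow)
  also have "\<dots> = (rate powr 2) powr (real k / 2)"
    by (simp add: powr_powr)
  also have "\<dots> = (rate\<^sup>2) powr (real k / 2)"
    using rate_bounds by simp
  also have "\<dots> \<le> rho powr (real k / 2)"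
    using \<open>rate\<^sup>2 \<le> rho\<close> by (intro powr_mono2) auto
  finally show ?thesis .
qed

lemma steady_error_le:
  "noise_gain * noise_bound / (1 - rate) + noise_bound \<le> 120 * sqrt \<alpha> / (dmin * sqrt dmin * (1 - \<gamma>) ^ 3)"
proof -
  define g where "g = 1 - \<gamma>"
  have g: "0 < g" "g \<le> 1" unfolding g_def using gamma by auto
  have "\<gamma> * (2 + gap_weight) \<le> 2 + gap_weight"
    using gamma gap_weight_pos by (simp add: mult_left_le_one_le)
  also have "\<dots> \<le> 6 / g"
    unfolding gap_weight_def g_def[symmetric] using g by (simp add: field_simps)
  finally have "\<gamma> * (2 + gap_weight) \<le> 6 / g" .
  then have "noise_gain / (1 - rate) \<le> 8 / (dmin * g\<^sup>2)"
  proof -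
    have "noise_gain / (1 - rate) = \<gamma> * (2 + gap_weight) * (4 / (3 * dmin * g))"
      unfolding noise_gain_def rate_bounds(3) g_def[symmetric] using alpha dmin_pos g
      by (simp add: field_simps)
    also have "\<dots> \<le> (6 / g) * (4 / (3 * dmin * g))"
      by (rule mult_right_mono[OF \<open>\<gamma> * (2 + gap_weight) \<le> 6 / g\<close>]) (use dmin_pos g in simp)
    also have "\<dots> = 8 / (dmin * g\<^sup>2)"
      using dmin_pos g by (simp add: field_simps power2_eq_square)
    finally show ?thesis .
  qed
  moreover have "8 / (dmin * g\<^sup>2) + 1 \<le> 9 / (dmin * g\<^sup>2)"
    using dmin_pos dmin_le_1 g by (simp add: field_simps power2_eq_square mult_le_one)
  ultimately have gain: "noise_gain / (1 - rate) + 1 \<le> 9 / (dmin * g\<^sup>2)" by linarith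
  have "noise_gain * noise_bound / (1 - rate) + noise_bound = noise_bound * (noise_gain / (1 - rate) + 1)"
    by (simp add: field_simps)
  also have "\<dots> \<le> noise_bound * (9 / (dmin * g\<^sup>2))"
    using gain noise_bound_pos by (intro mult_left_mono) auto
  also have "\<dots> = 36 * sqrt \<alpha> / (dmin * sqrt dmin * g ^ 3)"
    unfolding noise_bound_def qbound_def g_def[symmetric] using g dmin_pos
    by (simp add: real_sqrt_divide field_simps power2_eq_square power3_eq_cube)
  also have "\<dots> \<le> 120 * sqrt \<alpha> / (dmin * sqrt dmin * g ^ 3)"
    using dmin_pos g alpha by (intro divide_right_mono) auto
  finally show ?thesis unfolding g_def .
qed

lemma trivial_error_le:
  assumes "8 / 9 < \<alpha>"
  shows "2 * qbound \<le> 120 * sqrt \<alpha> / (dmin * sqrt dmin * (1 - \<gamma>) ^ 3)"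
proof -
  define D where "D = dmin * sqrt dmin * (1 - \<gamma>) ^ 3"
  have "1 / 60 \<le> sqrt \<alpha>" using assms by (intro real_le_rsqrt) (simp add: power2_eq_square)
  have "dmin * sqrt dmin \<le> 1" using dmin_pos dmin_le_1 by (simp add: mult_le_one)
  moreover have "(1 - \<gamma>) ^ 3 \<le> (1 - \<gamma>) ^ 1" using gamma by (intro power_decreasing) auto
  ultimately have "D \<le> 1 * (1 - \<gamma>)" unfolding D_def using dmin_pos gamma by (intro mult_mono) auto
  moreover have "0 < D" unfolding D_def using dmin_pos gamma by simp
  ultimately have "2 * qbound \<le> 2 / D"
    unfolding qbound_def by (simp add: divide_left_mono)
  also have "\<dots> \<le> 120 * sqrt \<alpha> / D"
    using \<open>1 / 60 \<le> sqrt \<alpha>\<close> \<open>0 < D\<close> by (intro divide_right_mono) auto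
  finally show ?thesis unfolding D_def .
qed

end

section \<open>Expected errors along the iteration\<close>

locale sdq_run = sdq P r d amax \<alpha> \<gamma>
  for P :: "'s::finite \<Rightarrow> 'a::finite \<Rightarrow> 's pmf" and r d amax \<alpha> \<gamma> +
  fixes QA0 QB0 :: "('s, 'a) qtable"
  assumes init: "supnorm QA0 \<le> 1" "supnorm QB0 \<le> 1"
begin

abbreviation Qdist :: "nat \<Rightarrow> (('s, 'a) qtable \<times> ('s, 'a) qtable) pmf" where
  "Qdist k \<equiv> sdq_dist amax \<alpha> \<gamma> r d P QA0 QB0 k"

primrec aug_dist :: "nat \<Rightarrow> ('s, 'a) aug_state pmf" where
  "aug_dist 0 = return_pmf ((QA0, QB0), (\<lambda>_ _. 0, \<lambda>_ _. 0))"
| "aug_dist (Suc k) = aug_dist k \<bind> (\<lambda>st. map_pmf (aug_step st) (sample_pmf d P))"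

lemma map_fst_aug_dist: "map_pmf fst (aug_dist k) = Qdist k"
proof (induction k)
  case 0
  then show ?case by simp
next
  case (Suc k)
  have "map_pmf fst (aug_dist (Suc k))
      = aug_dist k \<bind> (\<lambda>st. map_pmf (sdq_step amax \<alpha> \<gamma> r (fst st)) (sample_pmf d P))"
    by (simp add: map_bind_pmf map_pmf_comp fst_aug_step)
  also have "\<dots> = Qdist (Suc k)"
    by (simp add: Suc[symmetric] bind_map_pmf)
  finally show ?case .
qed

lemma finite_set_pmf_aug_dist: "finite (set_pmf (aug_dist k))"
  by (induction k) auto

lemma expectation_aug_dist_Suc:
  "measure_pmf.expectation (aug_dist (Suc k)) f
   = measure_pmf.expectation (aug_dist k) (\<lambda>st. Esample (\<lambda>\<xi>. f (aug_step st \<xi>)))"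
  by (simp add: expectation_bind_pmf_finite finite_set_pmf_aug_dist)

lemma Qdist_bounded:
  assumes "QQ \<in> set_pmf (Qdist k)"
  shows "\<bar>fst QQ s a\<bar> \<le> qbound \<and> \<bar>snd QQ s a\<bar> \<le> qbound"
  using assms
proof (induction k arbitrary: QQ s a)
  case 0
  then show ?case
    using init abs_le_supnorm[of QA0 s a] abs_le_supnorm[of QB0 s a] qbound_ge_1 by auto
next
  case (Suc k)
  then obtain QA QB \<xi> where QQ: "QQ = sdq_step amax \<alpha> \<gamma> r (QA, QB) \<xi>"
    and "(QA, QB) \<in> set_pmf (Qdist k)" by auto
  then have "\<bar>QA s a\<bar> \<le> qbound" "\<bar>QB s a\<bar> \<le> qbound" for s a
    using Suc.IH[of "(QA, QB)"] by simp_all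
  then show ?case
    unfolding QQ sdq_step_eq using abs_table_update_le by simp
qed

lemma aug_dist_bounded:
  assumes "st \<in> set_pmf (aug_dist k)"
  shows "\<bar>fst (fst st) s a\<bar> \<le> qbound" "\<bar>snd (fst st) s a\<bar> \<le> qbound"
proof -
  have "fst st \<in> set_pmf (Qdist k)"
    unfolding map_fst_aug_dist[symmetric] using assms by simp
  then show "\<bar>fst (fst st) s a\<bar> \<le> qbound" "\<bar>snd (fst st) s a\<bar> \<le> qbound"
    using Qdist_bounded by simp_all
qed

lemma expected_noise_energy_le:
  "measure_pmf.expectation (aug_dist k) noise_energy \<le> 2 * \<alpha> * (2 * qbound)\<^sup>2 / dmin"
proof -
  let ?x = "\<lambda>k. measure_pmf.expectation (aug_dist k) noise_energy"
  let ?c = "1 - \<alpha> * dmin" and ?b = "2 * (\<alpha>\<^sup>2 * (2 * qbound)\<^sup>2)"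
  have c: "0 \<le> ?c" "?c < 1"
    using alpha_dmin_bounds by auto
  have "?x (Suc k) \<le> ?c * ?x k + ?b" for k
  proof -
    have "?x (Suc k) \<le> measure_pmf.expectation (aug_dist k) (\<lambda>st. ?c * noise_energy st + ?b)"
      unfolding expectation_aug_dist_Suc
      using noise_energy_aug_step_le aug_dist_bounded
      by (intro expectation_mono_finite finite_set_pmf_aug_dist) blast
    also have "\<dots> = ?c * ?x k + ?b"
      by (simp add: integrable_measure_pmf_finite[OF finite_set_pmf_aug_dist])
    finally show ?thesis .
  qed
  then have "?x k \<le> ?c ^ k * ?x 0 + ?b / (1 - ?c)"
    using c by (intro geometric_recursion_le) auto
  also have "\<dots> = 2 * \<alpha> * (2 * qbound)\<^sup>2 / dmin"
    using alpha dmin_pos by (simp add: power2_eq_square sqnorm_def)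
  finally show ?thesis .
qed

lemma expected_noise_norm_le: "measure_pmf.expectation (aug_dist k) noise_norm \<le> noise_bound"
proof -
  have energy_bound: "2 * \<alpha> * (2 * qbound)\<^sup>2 / dmin = noise_bound\<^sup>2 / 2"
    unfolding noise_bound_def using alpha dmin_pos by (simp add: power_mult_distrib)
  have "measure_pmf.expectation (aug_dist k) noise_norm
      \<le> measure_pmf.expectation (aug_dist k) (\<lambda>st. noise_energy st / noise_bound + noise_bound / 2)"
    using noise_norm_le_energy[OF noise_bound_pos]
    by (intro expectation_mono_finite finite_set_pmf_aug_dist)
  also have "\<dots> = measure_pmf.expectation (aug_dist k) noise_energy / noise_bound + noise_bound / 2"
    by (simp add: integrable_measure_pmf_finite[OF finite_set_pmf_aug_dist])
  also have "\<dots> \<le> (2 * \<alpha> * (2 * qbound)\<^sup>2 / dmin) / noise_bound + noise_bound / 2"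
    using divide_right_mono[OF expected_noise_energy_le[of k] less_imp_le[OF noise_bound_pos]] by linarith
  also have "\<dots> = noise_bound"
    unfolding energy_bound using noise_bound_pos by (simp add: power2_eq_square)
  finally show ?thesis .
qed

lemma initial_residual_norm_le: "residual_norm ((QA0, QB0), (\<lambda>_ _. 0, \<lambda>_ _. 0)) \<le> 8 * qbound"
proof -
  have residual: "supnorm (residual Q (\<lambda>_ _. 0)) \<le> 8 * qbound" if "supnorm Q \<le> 1" for Q
  proof (rule supnorm_leI)
    fix s a
    show "\<bar>residual Q (\<lambda>_ _. 0) s a\<bar> \<le> 8 * qbound"
      using abs_le_supnorm[of Q s a] that abs_Qopt_le[of s a] qbound_ge_1
      unfolding residual_def by linarith
  qed
  have "supnorm (\<lambda>s a. residual QA0 (\<lambda>_ _. 0) s a - residual QB0 (\<lambda>_ _. 0) s a) \<le> 2"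
  proof (rule supnorm_leI)
    fix s a
    have "\<bar>QA0 s a\<bar> \<le> 1" "\<bar>QB0 s a\<bar> \<le> 1"
      using abs_le_supnorm[of QA0 s a] abs_le_supnorm[of QB0 s a] init by linarith+
    then show "\<bar>residual QA0 (\<lambda>_ _. 0) s a - residual QB0 (\<lambda>_ _. 0) s a\<bar> \<le> 2"
      unfolding residual_def by simp
  qed
  then have "gap_weight * supnorm (\<lambda>s a. residual QA0 (\<lambda>_ _. 0) s a - residual QB0 (\<lambda>_ _. 0) s a)
      \<le> gap_weight * 2"
    by (rule mult_left_mono) (use gap_weight_pos in simp)
  also have "gap_weight * 2 = 8 * qbound"
    unfolding gap_weight_def qbound_def by simp
  finally show ?thesis using residual init by simp
qed

lemma expected_residual_norm_le:
  "measure_pmf.expectation (aug_dist k) residual_norm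
     \<le> rate ^ k * (8 * qbound) + noise_gain * noise_bound / (1 - rate)"
proof -
  let ?x = "\<lambda>k. measure_pmf.expectation (aug_dist k) residual_norm"
  have "?x (Suc k) \<le> rate * ?x k + noise_gain * noise_bound" for k
  proof -
    have "?x (Suc k) \<le> measure_pmf.expectation (aug_dist k)
        (\<lambda>st. rate * residual_norm st + noise_gain * noise_norm st)"
      unfolding expectation_aug_dist_Suc
    proof (intro expectation_mono_finite finite_set_pmf_aug_dist)
      fix st
      have "Esample (\<lambda>\<xi>. residual_norm (aug_step st \<xi>))
          \<le> Esample (\<lambda>_. rate * residual_norm st + noise_gain * noise_norm st)"
        by (rule expectation_mono_finite) (simp_all add: residual_norm_aug_step_le)
      then show "Esample (\<lambda>\<xi>. residual_norm (aug_step st \<xi>)) \<le> rate * residual_norm st + noise_gain * noise_norm st"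
        by simp
    qed
    also have "\<dots> = rate * ?x k + noise_gain * measure_pmf.expectation (aug_dist k) noise_norm"
      by (simp add: integrable_measure_pmf_finite[OF finite_set_pmf_aug_dist])
    also have "\<dots> \<le> rate * ?x k + noise_gain * noise_bound"
      using expected_noise_norm_le noise_gain_nonneg by (simp add: mult_left_mono)
    finally show ?thesis .
  qed
  then have "?x k \<le> rate ^ k * ?x 0 + noise_gain * noise_bound / (1 - rate)"
    using rate_bounds noise_gain_nonneg noise_bound_pos by (intro geometric_recursion_le) auto
  also have "rate ^ k * ?x 0 \<le> rate ^ k * (8 * qbound)"
    using initial_residual_norm_le rate_bounds by (simp add: mult_left_mono)
  finally show ?thesis by simp
qed

lemma supnorm_error_le: "supnorm (\<lambda>s a. fst (fst st) s a - Qopt s a) \<le> residual_norm st + noise_norm st"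
proof -
  obtain QA QB zA zB where st: "st = ((QA, QB), (zA, zB))" by (metis prod.exhaust)
  have "\<bar>residual QA zA s a\<bar> \<le> residual_norm st" for s a
    using abs_le_supnorm[of "residual QA zA" s a] by (simp add: st)
  moreover have "supnorm zA \<le> noise_norm st"
    using supnorm_nonneg[of zB] by (simp add: st)
  ultimately have "supnorm (\<lambda>s a. QA s a - Qopt s a) \<le> residual_norm st + noise_norm st"
    by (rule supnorm_error_le_residual)
  then show ?thesis by (simp add: st)
qed

lemma expectation_Qdist:
  fixes f :: "('s, 'a) qtable \<times> ('s, 'a) qtable \<Rightarrow> real"
  shows "measure_pmf.expectation (Qdist k) f = measure_pmf.expectation (aug_dist k) (\<lambda>st. f (fst st))"
  unfolding map_fst_aug_dist[symmetric] by simp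

lemma expected_error_le:
  "measure_pmf.expectation (Qdist k) (\<lambda>(QA, QB). supnorm (\<lambda>s a. QA s a - Qopt s a))
     \<le> rate ^ k * (8 * qbound) + noise_gain * noise_bound / (1 - rate) + noise_bound"
proof -
  have "measure_pmf.expectation (Qdist k) (\<lambda>(QA, QB). supnorm (\<lambda>s a. QA s a - Qopt s a))
      \<le> measure_pmf.expectation (aug_dist k) (\<lambda>st. residual_norm st + noise_norm st)"
    unfolding expectation_Qdist
    using supnorm_error_le by (intro expectation_mono_finite finite_set_pmf_aug_dist) (simp add: case_prod_beta)
  also have "\<dots> = measure_pmf.expectation (aug_dist k) residual_norm
                 + measure_pmf.expectation (aug_dist k) noise_norm"
    by (simp add: integrable_measure_pmf_finite[OF finite_set_pmf_aug_dist])
  finally show ?thesis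
    using expected_residual_norm_le[of k] expected_noise_norm_le[of k] by linarith
qed

lemma expected_error_le_trivial:
  "measure_pmf.expectation (Qdist k) (\<lambda>(QA, QB). supnorm (\<lambda>s a. QA s a - Qopt s a)) \<le> 2 * qbound"
proof -
  have "measure_pmf.expectation (Qdist k) (\<lambda>(QA, QB). supnorm (\<lambda>s a. QA s a - Qopt s a))
      \<le> measure_pmf.expectation (Qdist k) (\<lambda>_. 2 * qbound)"
  proof (intro expectation_mono_finite finite_set_pmf_sdq_dist)
    fix QQ assume "QQ \<in> set_pmf (Qdist k)"
    then have "\<bar>fst QQ s a - Qopt s a\<bar> \<le> 2 * qbound" for s a
      using Qdist_bounded[of QQ k s a] abs_Qopt_le[of s a] by linarith
    then show "(\<lambda>(QA, QB). supnorm (\<lambda>s a. QA s a - Qopt s a)) QQ \<le> 2 * qbound"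
      by (simp add: case_prod_beta supnorm_leI)
  qed
  then show ?thesis by simp
qed

lemma expected_error_le_bound:
  "measure_pmf.expectation (Qdist k) (\<lambda>(QA, QB). supnorm (\<lambda>s a. QA s a - Qopt s a))
   \<le> 120 * sqrt \<alpha> * real (CARD('s) * CARD('a)) / (dmin powr (9/2) * (1 - \<gamma>) powr (11/2))
     + 48 * real (CARD('s) * CARD('a)) powr (3/2) / (1 - \<gamma>)
       * (rho powr (-4) * (-8)^4 / (ln rho)^4) * rho powr (-4 / ln rho) * rho powr (real k / 2)"
  (is "?E \<le> ?T1 + ?T2")
proof -
  have "0 < CARD('s)" "0 < CARD('a)" by (rule finite_UNIV_card_ge_0; simp)+
  then have "1 \<le> CARD('s) * CARD('a)" by (simp add: Suc_le_eq)
  then have N: "1 \<le> real (CARD('s) * CARD('a))" by (metis of_nat_1 of_nat_le_iff)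
  have T1: "120 * sqrt \<alpha> / (dmin * sqrt dmin * (1 - \<gamma>) ^ 3) \<le> ?T1"
    by (rule steady_coefficient_le) (use dmin_pos dmin_le_1 gamma alpha N in auto)
  have "8 / (1 - \<gamma>) \<le> 48 * real (CARD('s) * CARD('a)) powr (3/2) / (1 - \<gamma>)
       * (rho powr (-4) * (-8)^4 / (ln rho)^4) * rho powr (-4 / ln rho)"
    by (rule transient_coefficient_ge[OF rho_bounds N]) (use gamma in simp)
  then have T2: "8 * qbound * rho powr (real k / 2) \<le> ?T2"
    unfolding qbound_def times_divide_eq_right mult.right_neutral
    by (rule mult_right_mono) simp
  show ?thesis
  proof (cases "\<alpha> \<le> 8 / 9")
    case True
    have "rate ^ k * (8 * qbound) \<le> rho powr (real k / 2) * (8 * qbound)"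
      using rate_pow_le_rho_powr[OF True] qbound_pos by (intro mult_right_mono) auto
    also have "\<dots> = 8 * qbound * rho powr (real k / 2)"
      by (rule mult.commute)
    finally show ?thesis
      using expected_error_le[of k] steady_error_le T1 T2 by linarith
  next
    case False
    have "0 \<le> 8 * qbound * rho powr (real k / 2)" using qbound_pos by simp
    then show ?thesis
      using T2 expected_error_le_trivial[of k] trivial_error_le False T1 by linarith
  qed
qed

end

theorem corollary1:
  fixes P :: "'s::finite \<Rightarrow> 'a::finite \<Rightarrow> 's pmf"
    and r :: "'s \<Rightarrow> 'a \<Rightarrow> 's \<Rightarrow> real"
    and p :: "'s pmf" and \<beta> :: "'s \<Rightarrow> 'a pmf"
    and d :: "('s \<times> 'a) pmf"
    and amax :: "('a \<Rightarrow> real) \<Rightarrow> 'a"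
    and \<alpha> \<gamma> :: real
    and QA0 QB0 :: "'s \<Rightarrow> 'a \<Rightarrow> real"
    and k :: nat
  assumes alpha: "0 < \<alpha>" "\<alpha> < 1"
    and gamma: "0 < \<gamma>" "\<gamma> < 1"
    and rew: "\<And>s a s'. \<bar>r s a s'\<bar> \<le> 1"
    and stationary: "\<And>s'. pmf p s' = (\<Sum>s\<in>UNIV. \<Sum>a\<in>UNIV. pmf p s * pmf (\<beta> s) a * pmf (P s a) s')"
    and d_def: "\<And>s a. pmf d (s, a) = pmf p s * pmf (\<beta> s) a"
    and d_pos: "\<And>s a. pmf d (s, a) > 0"
    and amax: "\<And>f b. f b \<le> f (amax f)"
    and init: "supnorm QA0 \<le> 1" "supnorm QB0 \<le> 1"
  shows "let dmin = Min (range (pmf d));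
             \<rho> = 1 - \<alpha> * dmin * (1 - \<gamma>);
             N = real (CARD('s) * CARD('a));
             bound = 120 * sqrt \<alpha> * N / (dmin powr (9/2) * (1 - \<gamma>) powr (11/2))
                     + 48 * N powr (3/2) / (1 - \<gamma>)
                       * (\<rho> powr (-4) * (-8)^4 / (ln \<rho>)^4) * \<rho> powr (-4 / ln \<rho>)
                       * \<rho> powr (real k / 2)
         in measure_pmf.expectation (sdq_dist amax \<alpha> \<gamma> r d P QA0 QB0 k)
              (\<lambda>(QA, QB). supnorm (\<lambda>s a. QA s a - Qstar P r \<gamma> s a)) \<le> bound
          \<and> measure_pmf.expectation (sdq_dist amax \<alpha> \<gamma> r d P QA0 QB0 k)
              (\<lambda>(QA, QB). supnorm (\<lambda>s a. QB s a - Qstar P r \<gamma> s a)) \<le> bound"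
proof -
  interpret A: sdq_run P r d amax \<alpha> \<gamma> QA0 QB0
    using alpha gamma rew d_pos amax init by unfold_locales auto
  interpret B: sdq_run P r d amax \<alpha> \<gamma> QB0 QA0
    using alpha gamma rew d_pos amax init by unfold_locales auto
  have "measure_pmf.expectation (sdq_dist amax \<alpha> \<gamma> r d P QA0 QB0 k)
          (\<lambda>(QA, QB). supnorm (\<lambda>s a. QB s a - Qstar P r \<gamma> s a))
      = measure_pmf.expectation (sdq_dist amax \<alpha> \<gamma> r d P QB0 QA0 k)
          (\<lambda>(QA, QB). supnorm (\<lambda>s a. QA s a - Qstar P r \<gamma> s a))"
    by (simp add: sdq_dist_swap[where Q = QA0 and Q' = QB0] split_def)
  then show ?thesis
    using A.expected_error_le_bound B.expected_error_le_bound
    unfolding Let_def A.rho_def A.dmin_def by simp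
qed

end
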